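(* Let $X$ be a ball Banach function space on $\mathbb{R}^n$, $\gamma\in\mathbb{R}\setminus\{0\}$, $r\in(n,\infty)$, and $q\in(0,\infty)$. Assume that the Hardy--Littlewood maximal operator $\mathcal{M}$ is bounded on $X^{1/r}$ with operator norm $\|\mathcal{M}\|_{X^{1/r}\to X^{1/r}}$. Then there exists a positive constant $C$, depending only on $r,q,\gamma,n$ and $\|\mathcal{M}\|_{X^{1/r}\to X^{1/r}}$, such that for every $f\in C^1(\mathbb{R}^n)$ with $|\nabla f|\in C_{\mathrm c}(\mathbb{R}^n)$, $$\sup_{\lambda>0}\lambda\left\|\left[\int_{\mathbb{R}^n}\mathbf{1}_{E_{\lambda,\gamma/q}[f]}(\cdot,y)|\cdot-y|^{\gamma-n}dy\right]^{1/q}\right\|_X\le C\|\,|\nabla f|\,\|_X.$$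
   Context: A quasi-Banach space $X$ of measurable functions on $\mathbb{R}^n$ with quasi-norm defined on all measurable functions is a ball quasi-Banach function space if: $\|f\|_X=0$ implies $f=0$ a.e.; $|g|\le|f|$ a.e. implies $\|g\|_X\le\|f\|_X$; $0\le f_m\uparrow f$ a.e. implies $\|f_m\|_X\uparrow\|f\|_X$; $\mathbf{1}_B\in X$ for every ball $B$. It is a ball Banach function space if moreover the triangle inequality holds and for every ball $B$ there is $C_B$ with $\int_B|f|\le C_B\|f\|_X$. For $t>0$, $X^t:=\{f:|f|^t\in X\}$ with $\|f\|_{X^t}:=\|\,|f|^t\|_X^{1/t}$. $\mathcal{M}f(x):=\sup_{B\ni x}|B|^{-1}\int_B|f|$; bounded on $Y$ means $\|\mathcal{M}f\|_Y\le C\|f\|_Y$ for all $f\in Y$, least such $C$ being $\|\mathcal{M}\|_{Y\to Y}$. $E_{\lambda,\beta}[f]:=\{(x,y):x\ne y,\ |f(x)-f(y)|/|x-y|^{1+\beta}>\lambda\}$. *)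

theory Defs
  imports "HOL-Analysis.Analysis"
begin

text \<open>A (quasi-)norm on measurable real functions on a Euclidean space, possibly infinite.
  The space X is the set of measurable f with N f finite.\<close>

definition ball_Banach_function_space :: "(('a::euclidean_space \<Rightarrow> real) \<Rightarrow> ennreal) \<Rightarrow> bool" where
"ball_Banach_function_space N \<longleftrightarrow>
  N (\<lambda>x. 0) = 0 \<and>
  (\<forall>f \<in> borel_measurable lebesgue. \<forall>c::real. N (\<lambda>x. c * f x) = ennreal \<bar>c\<bar> * N f) \<and>
  (\<forall>f \<in> borel_measurable lebesgue. \<forall>g \<in> borel_measurable lebesgue.
      N (\<lambda>x. f x + g x) \<le> N f + N g) \<and>
  (\<forall>F. (\<forall>m. F m \<in> borel_measurable lebesgue \<and> N (F m) < \<infinity>) \<and>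
       (\<forall>e>0. \<exists>M. \<forall>m\<ge>M. \<forall>k\<ge>M. N (\<lambda>x. F m x - F k x) < ennreal e) \<longrightarrow>
       (\<exists>f \<in> borel_measurable lebesgue. N f < \<infinity> \<and> (\<lambda>m. N (\<lambda>x. F m x - f x)) \<longlonglongrightarrow> 0)) \<and>
  (\<forall>f \<in> borel_measurable lebesgue. N f = 0 \<longrightarrow> (AE x in lebesgue. f x = 0)) \<and>
  (\<forall>f \<in> borel_measurable lebesgue. \<forall>g \<in> borel_measurable lebesgue.
      (AE x in lebesgue. \<bar>g x\<bar> \<le> \<bar>f x\<bar>) \<longrightarrow> N g \<le> N f) \<and>
  (\<forall>F f. (\<forall>m. F m \<in> borel_measurable lebesgue) \<and> f \<in> borel_measurable lebesgue \<and>
      (AE x in lebesgue. (\<forall>m. 0 \<le> F m x \<and> F m x \<le> F (Suc m) x) \<and> (\<lambda>m. F m x) \<longlonglongrightarrow> f x)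
      \<longrightarrow> (\<lambda>m. N (F m)) \<longlonglongrightarrow> N f) \<and>
  (\<forall>c \<rho>. 0 < \<rho> \<longrightarrow> N (indicator (ball c \<rho>)) < \<infinity>) \<and>
  (\<forall>c \<rho>. 0 < \<rho> \<longrightarrow> (\<exists>C::real. \<forall>f \<in> borel_measurable lebesgue.
      (\<integral>\<^sup>+x\<in>ball c \<rho>. ennreal \<bar>f x\<bar> \<partial>lebesgue) \<le> ennreal C * N f))"

definition enn_powr :: "ennreal \<Rightarrow> real \<Rightarrow> ennreal" where
"enn_powr a t = (if a = \<infinity> then \<infinity> else ennreal (enn2real a powr t))"

text \<open>Canonical (Fatou) extension of N to [0,\<infinity>]-valued functions.\<close>
definition ext_norm :: "(('a \<Rightarrow> real) \<Rightarrow> ennreal) \<Rightarrow> ('a \<Rightarrow> ennreal) \<Rightarrow> ennreal" where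
"ext_norm N g = (SUP m::nat. N (\<lambda>x. enn2real (min (g x) (of_nat m))))"

text \<open>Quasi-norm of the convexification X^t: ||g||_{X^t} = || |g|^t ||_X^{1/t}.\<close>
definition pow_norm :: "(('a \<Rightarrow> real) \<Rightarrow> ennreal) \<Rightarrow> real \<Rightarrow> ('a \<Rightarrow> ennreal) \<Rightarrow> ennreal" where
"pow_norm N t g = enn_powr (ext_norm N (\<lambda>x. enn_powr (g x) t)) (1 / t)"

definition hl_max :: "('a::euclidean_space \<Rightarrow> real) \<Rightarrow> 'a \<Rightarrow> ennreal" where
"hl_max f x = (SUP B \<in> {ball c \<rho> | c \<rho>. 0 < \<rho> \<and> x \<in> ball c \<rho>}.
     (\<integral>\<^sup>+y\<in>B. ennreal \<bar>f y\<bar> \<partial>lebesgue) / emeasure lebesgue B)"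

definition maximal_bound :: "(('a::euclidean_space \<Rightarrow> real) \<Rightarrow> ennreal) \<Rightarrow> real \<Rightarrow> real \<Rightarrow> bool" where
"maximal_bound N t K \<longleftrightarrow> 0 \<le> K \<and>
  (\<forall>f \<in> borel_measurable lebesgue. pow_norm N t (\<lambda>x. ennreal \<bar>f x\<bar>) < \<infinity> \<longrightarrow>
      pow_norm N t (hl_max f) \<le> ennreal K * pow_norm N t (\<lambda>x. ennreal \<bar>f x\<bar>))"

text \<open>Operator norm of M on X^t (least bound; meaningful when some bound exists).\<close>
definition hl_opnorm :: "(('a::euclidean_space \<Rightarrow> real) \<Rightarrow> ennreal) \<Rightarrow> real \<Rightarrow> real" where
"hl_opnorm N t = Inf {K. maximal_bound N t K}"

definition E_set :: "real \<Rightarrow> real \<Rightarrow> ('a::euclidean_space \<Rightarrow> real) \<Rightarrow> ('a \<times> 'a) set" where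
"E_set lam \<beta> f = {(x, y). x \<noteq> y \<and> \<bar>f x - f y\<bar> / norm (x - y) powr (1 + \<beta>) > lam}"

end

(* Since r > n, a Morrey-type argument gives |f x - f y| <= C |x - y| (M(|grad f|^r)(x))^(1/r)
   for all x and y, with C depending only on n and r.  Hence the x-section of E_{lambda,gamma/q}[f]
   lies in {y. |x - y|^(gamma/q) < C (M(|grad f|^r)(x))^(1/r) / lambda}, a punctured ball if gamma > 0
   and the complement of a ball if gamma < 0.  Summing |x - y|^(gamma - n) over dyadic annuli bounds the
   integral over this set by a constant times the q-th power of the right-hand side, so the function
   inside the norm is pointwise at most (C / lambda) (M(|grad f|^r))^(1/r).  Finally, boundedness of M
   on X^(1/r) bounds the X-norm of (M(|grad f|^r))^(1/r) by ||M||^(1/r) || |grad f| ||_X. *)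

theory Submission
  imports Defs
begin

section \<open>Ball Banach function spaces and the maximal operator\<close>

lemma ball_Banach_function_space_mono:
  assumes "ball_Banach_function_space N"
    and "f \<in> borel_measurable lebesgue" "g \<in> borel_measurable lebesgue" "\<And>x. \<bar>g x\<bar> \<le> \<bar>f x\<bar>"
  shows "N g \<le> N f"
  using assms unfolding ball_Banach_function_space_def by auto

lemma ball_Banach_function_space_cmult:
  assumes "ball_Banach_function_space N" "f \<in> borel_measurable lebesgue"
  shows "N (\<lambda>x. c * f x) = ennreal \<bar>c\<bar> * N f"
  using assms unfolding ball_Banach_function_space_def by auto

lemma enn2real_min_cmult_le:
  fixes c :: real and a :: ennreal and m k :: nat
  assumes c: "0 < c" and mk: "real m \<le> c * real k"
  shows "enn2real (min (ennreal c * a) (of_nat m)) \<le> c * enn2real (min a (of_nat k))"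
proof (cases a)
  case (real v)
  have "min (c * v) (real m) \<le> c * min v (real k)"
  proof (cases "v \<le> real k")
    case False
    then have "c * real k < c * v" using c by simp
    then show ?thesis using False mk by (simp add: min_def)
  qed (simp add: min_def)
  moreover have "min (ennreal c * a) (of_nat m) = ennreal (min (c * v) (real m))"
    using real c by (simp add: ennreal_mult'[symmetric] ennreal_of_nat_eq_real_of_nat min_def ennreal_le_iff2)
  moreover have "min a (of_nat k) = ennreal (min v (real k))"
    using real by (simp add: ennreal_of_nat_eq_real_of_nat min_def)
  ultimately show ?thesis using real c by simp
next
  case top
  with c mk show ?thesis by (simp add: ennreal_mult_top)
qed

lemma ext_norm_mono:
  assumes N: "ball_Banach_function_space N"
    and [measurable]: "g1 \<in> borel_measurable lebesgue" "g2 \<in> borel_measurable lebesgue"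
    and le: "\<And>x. g1 x \<le> g2 x"
  shows "ext_norm N g1 \<le> ext_norm N g2"
  unfolding ext_norm_def
proof (intro SUP_mono bexI)
  fix m :: nat
  have "enn2real (min (g1 x) (of_nat m)) \<le> enn2real (min (g2 x) (of_nat m))" for x
    using le[of x] by (intro enn2real_mono) (auto simp: min.coboundedI1 min_less_iff_disj of_nat_less_top)
  then show "N (\<lambda>x. enn2real (min (g1 x) (of_nat m))) \<le> N (\<lambda>x. enn2real (min (g2 x) (of_nat m)))"
    by (intro ball_Banach_function_space_mono[OF N]) auto
qed simp

lemma ext_norm_cmult_le:
  assumes N: "ball_Banach_function_space N"
    and [measurable]: "g \<in> borel_measurable lebesgue" and c: "0 < c"
  shows "ext_norm N (\<lambda>x. ennreal c * g x) \<le> ennreal c * ext_norm N g"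
  unfolding ext_norm_def
proof (rule SUP_least)
  fix m :: nat
  define k where "k = nat \<lceil>real m / c\<rceil>"
  have mk: "real m \<le> c * real k"
    using c unfolding k_def by (metis divide_le_eq le_nat_iff mult.commute of_nat_0_le_iff real_nat_ceiling_ge)
  have "N (\<lambda>x. enn2real (min (ennreal c * g x) (of_nat m))) \<le> N (\<lambda>x. c * enn2real (min (g x) (of_nat k)))"
    using enn2real_min_cmult_le[OF c mk] c by (intro ball_Banach_function_space_mono[OF N]) auto
  also have "\<dots> = ennreal c * N (\<lambda>x. enn2real (min (g x) (of_nat k)))"
    using c by (simp add: ball_Banach_function_space_cmult[OF N])
  also have "\<dots> \<le> ennreal c * (SUP m. N (\<lambda>x. enn2real (min (g x) (of_nat m))))"
    by (intro mult_left_mono SUP_upper) auto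
  finally show "N (\<lambda>x. enn2real (min (ennreal c * g x) (of_nat m)))
      \<le> ennreal c * (SUP m. N (\<lambda>x. enn2real (min (g x) (of_nat m))))" .
qed

lemma ext_norm_le_cmult:
  assumes "ball_Banach_function_space N"
    and "g1 \<in> borel_measurable lebesgue" "g2 \<in> borel_measurable lebesgue"
    and "0 < c" "\<And>x. g1 x \<le> ennreal c * g2 x"
  shows "ext_norm N g1 \<le> ennreal c * ext_norm N g2"
proof -
  have "ext_norm N g1 \<le> ext_norm N (\<lambda>x. ennreal c * g2 x)"
    using assms by (intro ext_norm_mono) auto
  also have "\<dots> \<le> ennreal c * ext_norm N g2"
    using assms by (intro ext_norm_cmult_le) auto
  finally show ?thesis .
qed

lemma ext_norm_ennreal_le:
  assumes N: "ball_Banach_function_space N"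
    and [measurable]: "u \<in> borel_measurable lebesgue" and nonneg: "\<And>x. 0 \<le> u x"
  shows "ext_norm N (\<lambda>x. ennreal (u x)) \<le> N u"
  unfolding ext_norm_def
proof (rule SUP_least)
  fix m :: nat
  have "enn2real (min (ennreal (u x)) (of_nat m)) \<le> u x" for x
    using enn2real_mono[of "min (ennreal (u x)) (of_nat m)" "ennreal (u x)"] nonneg[of x] by simp
  then show "N (\<lambda>x. enn2real (min (ennreal (u x)) (of_nat m))) \<le> N u"
    using nonneg by (intro ball_Banach_function_space_mono[OF N]) auto
qed

lemma maximal_bound_mono:
  assumes "maximal_bound N t K1" "K1 \<le> K2"
  shows "maximal_bound N t K2"
  using assms unfolding maximal_bound_def
  by (meson ennreal_leI mult_right_mono order.trans zero_le)

lemma maximal_bound_hl_opnorm: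
  assumes "\<exists>K. maximal_bound N t K"
  shows "maximal_bound N t (hl_opnorm N t + 1)"
proof -
  have "bdd_below {K. maximal_bound N t K}"
    unfolding bdd_below_def maximal_bound_def by auto
  then obtain K where "maximal_bound N t K" "K < hl_opnorm N t + 1"
    using assms cInf_lessD[of "{K. maximal_bound N t K}"] unfolding hl_opnorm_def by force
  then show ?thesis
    using maximal_bound_mono by fastforce
qed

lemma enn_powr_ennreal: "0 \<le> x \<Longrightarrow> enn_powr (ennreal x) p = ennreal (x powr p)"
  by (simp add: enn_powr_def)

lemma enn_powr_top [simp]: "enn_powr top p = top"
  by (simp add: enn_powr_def)

lemma measurable_enn_powr [measurable]:
  assumes [measurable]: "g \<in> borel_measurable M"
  shows "(\<lambda>x. enn_powr (g x) p) \<in> borel_measurable M"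
  unfolding enn_powr_def by measurable

lemma powr_le_powr_iff:
  fixes a b p :: real
  assumes "0 \<le> a" "0 \<le> b" "0 < p"
  shows "a powr p \<le> b powr p \<longleftrightarrow> a \<le> b"
  using assms by (smt (verit, best) powr_less_mono2)

lemma enn_powr_le_iff:
  assumes "0 < p"
  shows "enn_powr a p \<le> enn_powr b p \<longleftrightarrow> a \<le> b"
proof (cases a; cases b)
  fix x y assume "a = ennreal x" "0 \<le> x" "b = ennreal y" "0 \<le> y"
  then show ?thesis using assms by (simp add: enn_powr_ennreal powr_le_powr_iff)
qed (auto simp: enn_powr_ennreal top_unique)

lemma enn_powr_cmult:
  assumes "0 < c"
  shows "enn_powr (ennreal c * a) p = ennreal (c powr p) * enn_powr a p"
proof (cases a)
  case (real x)
  then have "ennreal c * a = ennreal (c * x)"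
    using assms by (simp add: ennreal_mult)
  then have "enn_powr (ennreal c * a) p = ennreal ((c * x) powr p)"
    using real assms by (simp add: enn_powr_ennreal)
  with real assms show ?thesis
    by (simp add: enn_powr_ennreal powr_mult ennreal_mult)
qed (use assms in \<open>simp add: ennreal_mult_top\<close>)

lemma enn_powr_le_ennreal:
  assumes "a \<le> ennreal v" "0 \<le> v" "0 < p"
  shows "enn_powr a p \<le> ennreal (v powr p)"
  using enn_powr_le_iff[of p a "ennreal v"] assms by (simp add: enn_powr_ennreal)

definition hl_max_root :: "real \<Rightarrow> ('a::euclidean_space \<Rightarrow> real) \<Rightarrow> 'a \<Rightarrow> ennreal" where
  "hl_max_root r g x = enn_powr (hl_max (\<lambda>y. g y powr r) x) (1 / r)"

lemma borel_measurable_hl_max: "hl_max h \<in> borel_measurable borel"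
proof (rule borel_measurableI_greater)
  fix t :: ennreal
  have "open {x. t < hl_max h x}"
  proof (rule Topological_Spaces.openI)
    fix x assume "x \<in> {x. t < hl_max h x}"
    then obtain c \<rho> where B: "0 < \<rho>" "x \<in> ball c \<rho>"
        "t < (\<integral>\<^sup>+y\<in>ball c \<rho>. ennreal \<bar>h y\<bar> \<partial>lebesgue) / emeasure lebesgue (ball c \<rho>)"
      unfolding hl_max_def by (auto simp: less_SUP_iff)
    have "ball c \<rho> \<subseteq> {x. t < hl_max h x}"
    proof
      fix x' assume "x' \<in> ball c \<rho>"
      then have "ball c \<rho> \<in> {ball c \<rho> | c \<rho>. 0 < \<rho> \<and> x' \<in> ball c \<rho>}"
        using B(1) by blast
      then have "(\<integral>\<^sup>+y\<in>ball c \<rho>. ennreal \<bar>h y\<bar> \<partial>lebesgue) / emeasure lebesgue (ball c \<rho>) \<le> hl_max h x'"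
        unfolding hl_max_def by (rule SUP_upper)
      then show "x' \<in> {x. t < hl_max h x}" using B(3) by auto
    qed
    then show "\<exists>T. open T \<and> x \<in> T \<and> T \<subseteq> {x. t < hl_max h x}"
      using B(2) by blast
  qed
  then show "{x \<in> space borel. t < hl_max h x} \<in> sets borel" by simp
qed

(* 0 < K matters: in ennreal, 0 * infinity = 0. *)
lemma ext_norm_hl_max_root_le:
  fixes u :: "'a::euclidean_space \<Rightarrow> real"
  assumes N: "ball_Banach_function_space N" and K: "maximal_bound N (1 / r) K" "0 < K"
    and r: "0 < r" and u [measurable]: "u \<in> borel_measurable lebesgue" and nonneg: "\<And>x. 0 \<le> u x"
  shows "ext_norm N (hl_max_root r u) \<le> ennreal (K powr (1 / r)) * N u"
proof -
  define E where "E = ext_norm N (\<lambda>x. ennreal (u x))"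
  have "E \<le> N u"
    unfolding E_def using N u nonneg by (rule ext_norm_ennreal_le)
  show ?thesis
  proof (cases "E = \<infinity>")
    case True
    with \<open>E \<le> N u\<close> K show ?thesis by (simp add: top_unique ennreal_mult_top)
  next
    case False
    have u_root: "enn_powr (ennreal \<bar>u x powr r\<bar>) (1 / r) = ennreal (u x)" for x
      using r nonneg[of x] by (simp add: enn_powr_ennreal powr_powr)
    have pow_norm_u: "pow_norm N (1 / r) (\<lambda>x. ennreal \<bar>u x powr r\<bar>) = enn_powr E r"
      unfolding pow_norm_def u_root E_def by simp
    have "(\<lambda>x. u x powr r) \<in> borel_measurable lebesgue" by measurable
    moreover have "pow_norm N (1 / r) (\<lambda>x. ennreal \<bar>u x powr r\<bar>) < \<infinity>"
      unfolding pow_norm_u using False by (auto simp: enn_powr_def)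
    ultimately have "pow_norm N (1 / r) (hl_max (\<lambda>y. u y powr r))
        \<le> ennreal K * pow_norm N (1 / r) (\<lambda>x. ennreal \<bar>u x powr r\<bar>)"
      using K(1) unfolding maximal_bound_def by (auto dest!: bspec[where x = "\<lambda>x. u x powr r"])
    then have "enn_powr (ext_norm N (\<lambda>x. enn_powr (hl_max (\<lambda>y. u y powr r) x) (1 / r))) r
        \<le> ennreal K * enn_powr E r"
      unfolding pow_norm_u by (simp add: pow_norm_def)
    also have "\<dots> = enn_powr (ennreal (K powr (1 / r)) * E) r"
      using K r by (simp add: enn_powr_cmult powr_powr)
    finally have "ext_norm N (\<lambda>x. enn_powr (hl_max (\<lambda>y. u y powr r) x) (1 / r))
        \<le> ennreal (K powr (1 / r)) * E"
      by (simp only: enn_powr_le_iff[OF r])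
    also have "\<dots> \<le> ennreal (K powr (1 / r)) * N u"
      using \<open>E \<le> N u\<close> by (rule mult_left_mono) simp
    finally show ?thesis
      unfolding hl_max_root_def .
  qed
qed

section \<open>The kernel over sublevel sets of the distance\<close>

lemma ex_power2_bracket:
  fixes x :: real
  assumes "1 \<le> x"
  shows "\<exists>k::nat. 2 ^ k \<le> x \<and> x < 2 ^ (k + 1)"
proof -
  define k where "k = \<lfloor>log 2 x\<rfloor>"
  have "0 \<le> k" using assms unfolding k_def by simp
  moreover have "2 powr k \<le> x \<and> x < 2 powr (k + 1)"
    using assms floor_log_eq_powr_iff[of x 2 k] unfolding k_def by simp
  moreover have "2 powr k = 2 ^ nat k"
    using \<open>0 \<le> k\<close> by (metis of_nat_nat powr_realpow zero_less_numeral)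
  ultimately show ?thesis
    by (intro exI[of _ "nat k"]) (simp add: powr_add)
qed

lemma nn_integral_annulus_powr_le:
  fixes x :: "'a::euclidean_space"
  assumes \<rho>: "0 < \<rho>"
  shows "(\<integral>\<^sup>+y. indicator {y. \<rho> / 2 \<le> norm (x - y) \<and> norm (x - y) \<le> \<rho>} y * ennreal (norm (x - y) powr p) \<partial>lborel)
    \<le> ennreal (2 powr \<bar>p\<bar> * unit_ball_vol (real DIM('a)) * \<rho> powr (p + real DIM('a)))"
proof -
  define B where "B = 2 powr \<bar>p\<bar> * \<rho> powr p"
  have B: "d powr p \<le> B" if d: "\<rho> / 2 \<le> d" "d \<le> \<rho>" for d
  proof (cases "0 \<le> p")
    case True
    then have "d powr p \<le> \<rho> powr p" using d \<rho> by (intro powr_mono2) auto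
    also have "\<dots> \<le> B"
      unfolding B_def using mult_right_mono[of 1 "2 powr \<bar>p\<bar>" "\<rho> powr p"] by (simp add: ge_one_powr_ge_zero)
    finally show ?thesis .
  next
    case False
    then have "d powr p \<le> (\<rho> / 2) powr p" using d \<rho> powr_mono2'[of p "\<rho> / 2" d] by simp
    also have "\<dots> = B" unfolding B_def using False \<rho> by (simp add: powr_divide powr_minus_divide)
    finally show ?thesis .
  qed
  have "indicator {y. \<rho> / 2 \<le> norm (x - y) \<and> norm (x - y) \<le> \<rho>} y * ennreal (norm (x - y) powr p)
      \<le> ennreal B * indicator (cball x \<rho>) y" for y
  proof (cases "\<rho> / 2 \<le> norm (x - y) \<and> norm (x - y) \<le> \<rho>")
    case True
    then show ?thesis using B[of "norm (x - y)"] by (simp add: dist_norm ennreal_leI)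
  qed simp
  then have "(\<integral>\<^sup>+y. indicator {y. \<rho> / 2 \<le> norm (x - y) \<and> norm (x - y) \<le> \<rho>} y * ennreal (norm (x - y) powr p) \<partial>lborel)
      \<le> (\<integral>\<^sup>+y. ennreal B * indicator (cball x \<rho>) y \<partial>lborel)"
    by (rule nn_integral_mono)
  also have "\<dots> = ennreal B * ennreal (unit_ball_vol (real DIM('a)) * \<rho> ^ DIM('a))"
    using \<rho> by (simp add: nn_integral_cmult_indicator emeasure_cball)
  also have "\<dots> = ennreal (2 powr \<bar>p\<bar> * unit_ball_vol (real DIM('a)) * \<rho> powr (p + real DIM('a)))"
    using \<rho> by (simp add: B_def powr_add powr_realpow flip: ennreal_mult)
  finally show ?thesis .
qed

lemma nn_integral_powr_le_geometric_annuli: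
  fixes x :: "'a::euclidean_space" and S :: "'a set"
  assumes S [measurable]: "S \<in> sets borel" and R: "0 < R" and s: "0 < s" "s powr \<gamma> < 1"
    and cover: "\<And>y. y \<in> S \<Longrightarrow> \<exists>k::nat. R * s ^ k / 2 \<le> norm (x - y) \<and> norm (x - y) \<le> R * s ^ k"
  shows "(\<integral>\<^sup>+y. indicator S y * ennreal (norm (x - y) powr (\<gamma> - real DIM('a))) \<partial>lborel)
    \<le> ennreal (2 powr \<bar>\<gamma> - real DIM('a)\<bar> * unit_ball_vol (real DIM('a)) / (1 - s powr \<gamma>) * R powr \<gamma>)"
proof -
  define c where "c = 2 powr \<bar>\<gamma> - real DIM('a)\<bar> * unit_ball_vol (real DIM('a))"
  define A where "A k = {y. R * s ^ k / 2 \<le> norm (x - y) \<and> norm (x - y) \<le> R * s ^ k}" for k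
  define g where "g y = ennreal (norm (x - y) powr (\<gamma> - real DIM('a)))" for y
  have [measurable]: "A k \<in> sets borel" for k
    unfolding A_def by measurable
  have "indicator S y * g y \<le> (\<Sum>k. indicator (A k) y * g y)" for y
  proof (cases "y \<in> S")
    case True
    then obtain k where "y \<in> A k" using cover unfolding A_def by blast
    then show ?thesis
      using True sum_le_suminf[OF summableI, of "{k}" "\<lambda>k. indicator (A k) y * g y"] by simp
  qed simp
  then have "(\<integral>\<^sup>+y. indicator S y * g y \<partial>lborel) \<le> (\<integral>\<^sup>+y. (\<Sum>k. indicator (A k) y * g y) \<partial>lborel)"
    by (rule nn_integral_mono)
  also have "\<dots> = (\<Sum>k. \<integral>\<^sup>+y. indicator (A k) y * g y \<partial>lborel)"
    unfolding g_def by (rule nn_integral_suminf) measurable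
  also have "\<dots> \<le> (\<Sum>k. ennreal (c * R powr \<gamma> * (s powr \<gamma>) ^ k))"
  proof (intro suminf_le summableI)
    fix k
    have "(R * s ^ k) powr (\<gamma> - real DIM('a) + real DIM('a)) = R powr \<gamma> * (s powr \<gamma>) ^ k"
      using R s by (simp add: powr_mult powr_realpow[symmetric] powr_powr powr_power mult.commute)
    then show "(\<integral>\<^sup>+y. indicator (A k) y * g y \<partial>lborel) \<le> ennreal (c * R powr \<gamma> * (s powr \<gamma>) ^ k)"
      using nn_integral_annulus_powr_le[of "R * s ^ k" x "\<gamma> - real DIM('a)"] R s
      unfolding A_def g_def c_def by (simp add: mult.assoc)
  qed
  also have "\<dots> = ennreal (c * R powr \<gamma> * (1 / (1 - s powr \<gamma>)))"
    using s unfolding c_def by (intro suminf_ennreal_eq sums_mult geometric_sums) auto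
  finally show ?thesis
    unfolding g_def c_def by (simp add: mult_ac)
qed

lemma nn_integral_punctured_ball_powr_le:
  fixes x :: "'a::euclidean_space"
  assumes \<gamma>: "0 < \<gamma>" and T: "0 < T"
  shows "(\<integral>\<^sup>+y. indicator {y. y \<noteq> x \<and> norm (x - y) \<le> T} y * ennreal (norm (x - y) powr (\<gamma> - real DIM('a))) \<partial>lborel)
    \<le> ennreal (2 powr \<bar>\<gamma> - real DIM('a)\<bar> * unit_ball_vol (real DIM('a)) / (1 - (1 / 2) powr \<gamma>) * T powr \<gamma>)"
proof (rule nn_integral_powr_le_geometric_annuli)
  show "(1 / 2 :: real) powr \<gamma> < 1"
    using \<gamma> powr_less_mono2[of \<gamma> "1 / 2" 1] by simp
  fix y assume "y \<in> {y. y \<noteq> x \<and> norm (x - y) \<le> T}"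
  then have d: "0 < norm (x - y)" "norm (x - y) \<le> T" by auto
  then obtain k :: nat where "2 ^ k \<le> T / norm (x - y)" "T / norm (x - y) < 2 ^ (k + 1)"
    using ex_power2_bracket[of "T / norm (x - y)"] by auto
  with d show "\<exists>k::nat. T * (1 / 2) ^ k / 2 \<le> norm (x - y) \<and> norm (x - y) \<le> T * (1 / 2) ^ k"
    by (intro exI[of _ k]) (auto simp: field_simps)
qed (use T in auto)

lemma nn_integral_ball_complement_powr_le:
  fixes x :: "'a::euclidean_space"
  assumes \<gamma>: "\<gamma> < 0" and T: "0 < T"
  shows "(\<integral>\<^sup>+y. indicator {y. T \<le> norm (x - y)} y * ennreal (norm (x - y) powr (\<gamma> - real DIM('a))) \<partial>lborel)
    \<le> ennreal (2 powr \<bar>\<gamma> - real DIM('a)\<bar> * unit_ball_vol (real DIM('a)) / (1 - 2 powr \<gamma>) * (2 * T) powr \<gamma>)"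
proof (rule nn_integral_powr_le_geometric_annuli)
  show "(2 :: real) powr \<gamma> < 1"
    using \<gamma> by (simp add: powr_less_one)
  fix y assume "y \<in> {y. T \<le> norm (x - y)}"
  then have d: "T \<le> norm (x - y)" by auto
  then obtain k :: nat where "2 ^ k \<le> norm (x - y) / T" "norm (x - y) / T < 2 ^ (k + 1)"
    using T ex_power2_bracket[of "norm (x - y) / T"] by auto
  with T show "\<exists>k::nat. 2 * T * 2 ^ k / 2 \<le> norm (x - y) \<and> norm (x - y) \<le> 2 * T * 2 ^ k"
    by (intro exI[of _ k]) (auto simp: field_simps)
qed (use T in auto)

lemma nn_integral_sublevel_powr_le_pos:
  fixes x :: "'a::euclidean_space"
  assumes \<gamma>: "0 < \<gamma>" and q: "0 < q" and T: "0 < T"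
  shows "(\<integral>\<^sup>+y. indicator {y. y \<noteq> x \<and> norm (x - y) powr (\<gamma> / q) < T} y
      * ennreal (norm (x - y) powr (\<gamma> - real DIM('a))) \<partial>lborel)
    \<le> ennreal (2 powr \<bar>\<gamma> - real DIM('a)\<bar> * unit_ball_vol (real DIM('a)) / (1 - (1 / 2) powr \<gamma>) * T powr q)"
proof -
  have "{y. y \<noteq> x \<and> norm (x - y) powr (\<gamma> / q) < T} \<subseteq> {y. y \<noteq> x \<and> norm (x - y) \<le> T powr (q / \<gamma>)}"
  proof safe
    fix y assume "y \<noteq> x" "norm (x - y) powr (\<gamma> / q) < T"
    then have "(norm (x - y) powr (\<gamma> / q)) powr (q / \<gamma>) < T powr (q / \<gamma>)"
      using \<gamma> q powr_less_mono2[of "q / \<gamma>" "norm (x - y) powr (\<gamma> / q)" T] by simp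
    then show "norm (x - y) \<le> T powr (q / \<gamma>)"
      using \<gamma> q by (simp add: powr_powr)
  qed
  then have "(\<integral>\<^sup>+y. indicator {y. y \<noteq> x \<and> norm (x - y) powr (\<gamma> / q) < T} y
        * ennreal (norm (x - y) powr (\<gamma> - real DIM('a))) \<partial>lborel)
      \<le> (\<integral>\<^sup>+y. indicator {y. y \<noteq> x \<and> norm (x - y) \<le> T powr (q / \<gamma>)} y
        * ennreal (norm (x - y) powr (\<gamma> - real DIM('a))) \<partial>lborel)"
    by (intro nn_integral_mono mult_right_mono) (auto simp: indicator_def)
  also have "\<dots> \<le> ennreal (2 powr \<bar>\<gamma> - real DIM('a)\<bar> * unit_ball_vol (real DIM('a)) / (1 - (1 / 2) powr \<gamma>)
      * (T powr (q / \<gamma>)) powr \<gamma>)"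
    using T by (intro nn_integral_punctured_ball_powr_le[OF \<gamma>]) simp
  finally show ?thesis
    using \<gamma> by (simp add: powr_powr)
qed

lemma nn_integral_sublevel_powr_le_neg:
  fixes x :: "'a::euclidean_space"
  assumes \<gamma>: "\<gamma> < 0" and q: "0 < q" and T: "0 < T"
  shows "(\<integral>\<^sup>+y. indicator {y. y \<noteq> x \<and> norm (x - y) powr (\<gamma> / q) < T} y
      * ennreal (norm (x - y) powr (\<gamma> - real DIM('a))) \<partial>lborel)
    \<le> ennreal (2 powr \<bar>\<gamma> - real DIM('a)\<bar> * unit_ball_vol (real DIM('a)) / (1 - 2 powr \<gamma>) * 2 powr \<gamma> * T powr q)"
proof -
  have "{y. y \<noteq> x \<and> norm (x - y) powr (\<gamma> / q) < T} \<subseteq> {y. T powr (q / \<gamma>) \<le> norm (x - y)}"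
  proof safe
    fix y assume "y \<noteq> x" "norm (x - y) powr (\<gamma> / q) < T"
    then have "T powr (q / \<gamma>) < (norm (x - y) powr (\<gamma> / q)) powr (q / \<gamma>)"
      using \<gamma> q powr_less_mono2_neg[of "q / \<gamma>" "norm (x - y) powr (\<gamma> / q)" T]
      by (simp add: divide_pos_neg)
    then show "T powr (q / \<gamma>) \<le> norm (x - y)"
      using \<gamma> q by (simp add: powr_powr)
  qed
  then have "(\<integral>\<^sup>+y. indicator {y. y \<noteq> x \<and> norm (x - y) powr (\<gamma> / q) < T} y
        * ennreal (norm (x - y) powr (\<gamma> - real DIM('a))) \<partial>lborel)
      \<le> (\<integral>\<^sup>+y. indicator {y. T powr (q / \<gamma>) \<le> norm (x - y)} y
        * ennreal (norm (x - y) powr (\<gamma> - real DIM('a))) \<partial>lborel)"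
    by (intro nn_integral_mono mult_right_mono) (auto simp: indicator_def)
  also have "\<dots> \<le> ennreal (2 powr \<bar>\<gamma> - real DIM('a)\<bar> * unit_ball_vol (real DIM('a)) / (1 - 2 powr \<gamma>)
      * (2 * T powr (q / \<gamma>)) powr \<gamma>)"
    using T by (intro nn_integral_ball_complement_powr_le[OF \<gamma>]) simp
  finally show ?thesis
    using \<gamma> by (simp add: powr_powr powr_mult mult_ac)
qed

lemma nn_integral_kernel_sublevel_le:
  fixes \<gamma> q :: real
  assumes \<gamma>: "\<gamma> \<noteq> 0" and q: "0 < q"
  obtains c where "0 < c"
    "\<And>(x::'a::euclidean_space) T. 0 \<le> T \<Longrightarrow>
      (\<integral>\<^sup>+y. indicator {y. y \<noteq> x \<and> norm (x - y) powr (\<gamma> / q) < T} y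
         * ennreal (norm (x - y) powr (\<gamma> - real DIM('a))) \<partial>lborel) \<le> ennreal (c * T powr q)"
proof -
  define I where "I x T = (\<integral>\<^sup>+y. indicator {y. y \<noteq> x \<and> norm (x - y) powr (\<gamma> / q) < T} y
    * ennreal (norm (x - y) powr (\<gamma> - real DIM('a))) \<partial>lborel)" for x :: 'a and T
  define c0 where "c0 = 2 powr \<bar>\<gamma> - real DIM('a)\<bar> * unit_ball_vol (real DIM('a))"
  have c0: "0 < c0"
    unfolding c0_def by simp
  have "\<exists>c>0. \<forall>x T. 0 < T \<longrightarrow> I x T \<le> ennreal (c * T powr q)"
  proof (cases "0 < \<gamma>")
    case True
    have "(1 / 2 :: real) powr \<gamma> < 1"
      using True powr_less_mono2[of \<gamma> "1 / 2" 1] by simp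
    with c0 show ?thesis
      using nn_integral_sublevel_powr_le_pos[where 'a='a, OF True q] unfolding I_def
      by (intro exI[of _ "c0 / (1 - (1 / 2) powr \<gamma>)"]) (simp add: c0_def)
  next
    case False
    with \<gamma> have neg: "\<gamma> < 0" by simp
    then have "(2 :: real) powr \<gamma> < 1"
      by (simp add: powr_less_one)
    with c0 show ?thesis
      using nn_integral_sublevel_powr_le_neg[where 'a='a, OF neg q] unfolding I_def
      by (intro exI[of _ "c0 / (1 - 2 powr \<gamma>) * 2 powr \<gamma>"]) (simp add: c0_def)
  qed
  then obtain c where c: "0 < c" and bound: "\<And>x T. 0 < T \<Longrightarrow> I x T \<le> ennreal (c * T powr q)"
    by blast
  have "I x 0 = 0" for x
    unfolding I_def by (simp add: not_less)
  then have "I x T \<le> ennreal (c * T powr q)" if "0 \<le> T" for x T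
    using bound[of T x] that by (cases "T = 0") auto
  from that[OF c this[unfolded I_def]] show thesis .
qed

section \<open>A Morrey inequality controlled by the maximal function\<close>

lemma le_add_scaled_powr:
  fixes u T r :: real
  assumes u: "0 \<le> u" and T: "0 < T" and r: "1 \<le> r"
  shows "u \<le> T + T powr (1 - r) * u powr r"
proof (cases "u \<le> T")
  case True
  then show ?thesis using u T by (simp add: add_increasing2)
next
  case False
  then have "1 \<le> u / T" using T by simp
  then have "u / T \<le> (u / T) powr r"
    using r u T powr_mono[of 1 r "u / T"] by simp
  also have "\<dots> = T powr (1 - r) * u powr r / T"
    using u T by (simp add: powr_divide powr_diff)
  finally show ?thesis
    using T by (simp add: divide_le_eq add_increasing)
qed

lemma nn_integral_lborel_dilation:
  fixes h :: "'a::euclidean_space \<Rightarrow> ennreal" and c :: real and a :: 'a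
  assumes [measurable]: "h \<in> borel_measurable borel" and c: "0 < c"
  shows "(\<integral>\<^sup>+w. h w \<partial>lborel) = ennreal (c ^ DIM('a)) * (\<integral>\<^sup>+z. h (a + c *\<^sub>R (z - a)) \<partial>lborel)"
proof -
  have eq: "a + c *\<^sub>R (z - a) = (a - c *\<^sub>R a) + c *\<^sub>R z" for z
    by (simp add: algebra_simps)
  have "(\<integral>\<^sup>+w. h w \<partial>lborel)
      = (\<integral>\<^sup>+w. h w \<partial>density (distr lborel borel (\<lambda>x. (a - c *\<^sub>R a) + c *\<^sub>R x)) (\<lambda>_. \<bar>c\<bar> ^ DIM('a)))"
    using lborel_affine[of c "a - c *\<^sub>R a"] c by simp
  also have "\<dots> = (\<integral>\<^sup>+z. ennreal (c ^ DIM('a)) * h ((a - c *\<^sub>R a) + c *\<^sub>R z) \<partial>lborel)"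
    using c by (simp add: nn_integral_density nn_integral_distr)
  also have "\<dots> = ennreal (c ^ DIM('a)) * (\<integral>\<^sup>+z. h (a + c *\<^sub>R (z - a)) \<partial>lborel)"
    unfolding eq by (rule nn_integral_cmult) simp
  finally show ?thesis .
qed

lemma nn_integral_ball_le_hl_max:
  fixes h :: "'a::euclidean_space \<Rightarrow> real"
  assumes R: "0 < R"
  shows "(\<integral>\<^sup>+w. indicator (ball x R) w * ennreal \<bar>h w\<bar> \<partial>lborel)
    \<le> hl_max h x * ennreal (unit_ball_vol (real DIM('a)) * R ^ DIM('a))"
proof -
  define J where "J = (\<integral>\<^sup>+w. indicator (ball x R) w * ennreal \<bar>h w\<bar> \<partial>lborel)"
  define \<mu> where "\<mu> = ennreal (unit_ball_vol (real DIM('a)) * R ^ DIM('a))"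
  have "unit_ball_vol (real DIM('a)) \<noteq> 0"
    using unit_ball_vol_pos[of "real DIM('a)"] by linarith
  then have \<mu>: "\<mu> \<noteq> 0" "\<mu> \<noteq> \<infinity>"
    unfolding \<mu>_def using R by simp_all
  have "ball x R \<in> {ball c \<rho> | c \<rho>. 0 < \<rho> \<and> x \<in> ball c \<rho>}"
    using R by (intro CollectI exI[of _ x] exI[of _ R]) simp
  then have "(\<integral>\<^sup>+y\<in>ball x R. ennreal \<bar>h y\<bar> \<partial>lebesgue) / emeasure lebesgue (ball x R) \<le> hl_max h x"
    unfolding hl_max_def by (rule SUP_upper)
  moreover have "(\<integral>\<^sup>+y\<in>ball x R. ennreal \<bar>h y\<bar> \<partial>lebesgue) = J"
    unfolding J_def nn_integral_completion by (simp add: mult.commute)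
  moreover have "emeasure lebesgue (ball x R) = \<mu>"
    unfolding \<mu>_def using R by (simp add: emeasure_ball)
  ultimately have "J / \<mu> * \<mu> \<le> hl_max h x * \<mu>"
    by (simp add: mult_right_mono)
  moreover have "J / \<mu> * \<mu> = J"
    using \<mu> by (simp add: ennreal_divide_times top.not_eq_extremum)
  ultimately have "J \<le> hl_max h x * \<mu>"
    by simp
  then show ?thesis
    unfolding J_def \<mu>_def .
qed

lemma nn_integral_ball_le_young:
  fixes g :: "'a::euclidean_space \<Rightarrow> real"
  assumes g [measurable]: "g \<in> borel_measurable borel" and g_nonneg: "\<And>w. 0 \<le> g w"
    and r: "1 \<le> r" and T: "0 < T" and s: "0 < s" and sub: "ball a s \<subseteq> ball x R"
  shows "(\<integral>\<^sup>+w. indicator (ball a s) w * ennreal (g w) \<partial>lborel)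
    \<le> ennreal (T * (unit_ball_vol (real DIM('a)) * s ^ DIM('a)))
      + ennreal (T powr (1 - r)) * (\<integral>\<^sup>+w. indicator (ball x R) w * ennreal (g w powr r) \<partial>lborel)"
proof -
  have [measurable]: "ball a s \<in> sets borel" "ball x R \<in> sets borel"
    by auto
  have "indicator (ball a s) w * ennreal (g w)
     \<le> ennreal T * indicator (ball a s) w + ennreal (T powr (1 - r)) * (indicator (ball x R) w * ennreal (g w powr r))" for w
  proof (cases "w \<in> ball a s")
    case True
    have "ennreal (g w) \<le> ennreal (T + T powr (1 - r) * g w powr r)"
      using le_add_scaled_powr[OF g_nonneg T r] by (rule ennreal_leI)
    with True sub T show ?thesis by (auto simp: ennreal_plus ennreal_mult)
  qed simp
  then have "(\<integral>\<^sup>+w. indicator (ball a s) w * ennreal (g w) \<partial>lborel)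
      \<le> (\<integral>\<^sup>+w. ennreal T * indicator (ball a s) w + ennreal (T powr (1 - r)) * (indicator (ball x R) w * ennreal (g w powr r)) \<partial>lborel)"
    by (rule nn_integral_mono)
  also have "\<dots> = (\<integral>\<^sup>+w. ennreal T * indicator (ball a s) w \<partial>lborel)
      + (\<integral>\<^sup>+w. ennreal (T powr (1 - r)) * (indicator (ball x R) w * ennreal (g w powr r)) \<partial>lborel)"
    by (rule nn_integral_add) measurable
  finally show ?thesis
    using s T by (simp add: nn_integral_cmult nn_integral_cmult_indicator emeasure_ball ennreal_mult)
qed

lemma nn_integral_ball_le_hl_max_powr:
  fixes g :: "'a::euclidean_space \<Rightarrow> real"
  assumes g: "g \<in> borel_measurable borel" "\<And>w. 0 \<le> g w"
    and r: "1 \<le> r" and S: "0 < S" and s: "0 < s" and R: "0 < R"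
    and sub: "ball a s \<subseteq> ball x R" and M: "hl_max (\<lambda>y. g y powr r) x \<le> ennreal (S powr r)"
  shows "(\<integral>\<^sup>+w. indicator (ball a s) w * ennreal (g w) \<partial>lborel)
    \<le> ennreal (2 * S * (R / s) powr (real DIM('a) / r) * unit_ball_vol (real DIM('a)) * s ^ DIM('a))"
proof -
  define n where "n = DIM('a)"
  define \<omega> where "\<omega> = unit_ball_vol (real DIM('a))"
  \<comment> \<open>This choice of T balances the two terms of Young's inequality; it replaces Hoelder's inequality.\<close>
  define T where "T = S * (R / s) powr (real n / r)"
  have T: "0 < T" unfolding T_def using S R s by simp
  have "(\<integral>\<^sup>+w. indicator (ball x R) w * ennreal (g w powr r) \<partial>lborel)
      \<le> hl_max (\<lambda>y. g y powr r) x * ennreal (\<omega> * R ^ n)"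
    using nn_integral_ball_le_hl_max[OF R, where h = "\<lambda>y. g y powr r" and x = x] unfolding \<omega>_def n_def by simp
  also have "\<dots> \<le> ennreal (S powr r) * ennreal (\<omega> * R ^ n)"
    using M by (rule mult_right_mono) simp
  finally have "(\<integral>\<^sup>+w. indicator (ball a s) w * ennreal (g w) \<partial>lborel)
      \<le> ennreal (T * (\<omega> * s ^ n)) + ennreal (T powr (1 - r)) * (ennreal (S powr r) * ennreal (\<omega> * R ^ n))"
    using nn_integral_ball_le_young[OF g r T s sub] unfolding \<omega>_def n_def
    by (meson add_left_mono mult_left_mono order_trans zero_le)
  also have "\<dots> = ennreal (T * (\<omega> * s ^ n) + T powr (1 - r) * (S powr r * (\<omega> * R ^ n)))"
    using T S R s by (simp add: \<omega>_def ennreal_plus ennreal_mult)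
  also have "T powr (1 - r) * (S powr r * (\<omega> * R ^ n)) = T * (\<omega> * s ^ n)"
  proof -
    have "T powr r = S powr r * (R ^ n / s ^ n)"
      unfolding T_def using S R s r by (simp add: powr_mult powr_powr powr_realpow power_divide)
    then show ?thesis
      using S R s T by (simp add: powr_diff field_simps)
  qed
  finally show ?thesis
    unfolding T_def \<omega>_def n_def by (simp add: mult_ac flip: mult_2)
qed

lemma nn_integral_ball_dilation:
  fixes h :: "'a::euclidean_space \<Rightarrow> ennreal"
  assumes [measurable]: "h \<in> borel_measurable borel" and t: "0 < t"
  shows "(\<integral>\<^sup>+z. indicator (ball a \<rho>) z * h (a + t *\<^sub>R (z - a)) \<partial>lborel)
    = ennreal (1 / t ^ DIM('a)) * (\<integral>\<^sup>+w. indicator (ball a (t * \<rho>)) w * h w \<partial>lborel)"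
proof -
  have "indicator (ball a (t * \<rho>)) (a + t *\<^sub>R (z - a)) = (indicator (ball a \<rho>) z :: ennreal)" for z
  proof -
    have "dist a (a + t *\<^sub>R (z - a)) = t * dist a z"
      using t by (simp add: dist_norm norm_minus_commute)
    then show ?thesis using t by (simp add: indicator_def)
  qed
  moreover have "(\<lambda>w. indicator (ball a (t * \<rho>)) w * h w) \<in> borel_measurable borel"
    using assms(1) by (auto intro!: borel_measurable_times_ennreal borel_measurable_indicator)
  ultimately have "(\<integral>\<^sup>+w. indicator (ball a (t * \<rho>)) w * h w \<partial>lborel)
      = ennreal (t ^ DIM('a)) * (\<integral>\<^sup>+z. indicator (ball a \<rho>) z * h (a + t *\<^sub>R (z - a)) \<partial>lborel)"
    using t by (subst nn_integral_lborel_dilation[where c = t and a = a]) simp_all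
  then show ?thesis
    using t by (simp add: mult.assoc[symmetric] flip: ennreal_mult)
qed

lemma nn_integral_ball_mult_norm_le:
  fixes k :: "'a::euclidean_space \<Rightarrow> real"
  assumes [measurable]: "k \<in> borel_measurable borel" and k_nonneg: "\<And>z. 0 \<le> k z" and \<rho>: "0 \<le> \<rho>"
  shows "(\<integral>\<^sup>+z. indicator (ball a \<rho>) z * ennreal (k z * norm (z - a)) \<partial>lborel)
    \<le> ennreal \<rho> * (\<integral>\<^sup>+z. indicator (ball a \<rho>) z * ennreal (k z) \<partial>lborel)"
proof -
  have [measurable]: "ball a \<rho> \<in> sets borel"
    by simp
  have "indicator (ball a \<rho>) z * ennreal (k z * norm (z - a)) \<le> ennreal \<rho> * (indicator (ball a \<rho>) z * ennreal (k z))" for z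
  proof (cases "z \<in> ball a \<rho>")
    case True
    then have "norm (z - a) \<le> \<rho>"
      by (simp add: dist_norm norm_minus_commute)
    then have "k z * norm (z - a) \<le> \<rho> * k z"
      using k_nonneg[of z] mult_left_mono[of "norm (z - a)" \<rho> "k z"] by (simp add: mult.commute)
    then show ?thesis
      using True \<rho> k_nonneg[of z] by (simp add: ennreal_mult[symmetric] ennreal_leI)
  qed simp
  then have "(\<integral>\<^sup>+z. indicator (ball a \<rho>) z * ennreal (k z * norm (z - a)) \<partial>lborel)
      \<le> (\<integral>\<^sup>+z. ennreal \<rho> * (indicator (ball a \<rho>) z * ennreal (k z)) \<partial>lborel)"
    by (rule nn_integral_mono)
  also have "\<dots> = ennreal \<rho> * (\<integral>\<^sup>+z. indicator (ball a \<rho>) z * ennreal (k z) \<partial>lborel)"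
    by (rule nn_integral_cmult) measurable
  finally show ?thesis .
qed

lemma nn_integral_ball_dilated_le:
  fixes g :: "'a::euclidean_space \<Rightarrow> real"
  assumes g [measurable]: "g \<in> borel_measurable borel" and g_nonneg: "\<And>w. 0 \<le> g w"
    and r: "1 \<le> r" and S: "0 < S" and \<rho>: "0 < \<rho>" and ax: "dist x a \<le> \<rho>"
    and M: "hl_max (\<lambda>y. g y powr r) x \<le> ennreal (S powr r)" and t: "0 < t" "t \<le> 1"
  shows "(\<integral>\<^sup>+z. indicator (ball a \<rho>) z * ennreal (g (a + t *\<^sub>R (z - a)) * norm (z - a)) \<partial>lborel)
    \<le> ennreal (2 * unit_ball_vol (real DIM('a)) * 2 powr (real DIM('a) / r) * S * \<rho> ^ (DIM('a) + 1)
        * t powr (- (real DIM('a) / r)))"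
proof -
  define n where "n = DIM('a)"
  define \<omega> where "\<omega> = unit_ball_vol (real DIM('a))"
  define B where "B = 2 * S * (2 / t) powr (real n / r) * \<omega> * (t * \<rho>) ^ n"
  have B_nonneg: "0 \<le> B"
    unfolding B_def \<omega>_def using S t \<rho> by simp
  define I where "I = (\<integral>\<^sup>+z. indicator (ball a \<rho>) z * ennreal (g (a + t *\<^sub>R (z - a))) \<partial>lborel)"
  have "t * \<rho> \<le> \<rho>"
    using t \<rho> by simp
  then have "ball a (t * \<rho>) \<subseteq> ball x (2 * \<rho>)"
    using ax by (auto simp: subset_iff intro: le_less_trans[OF dist_triangle[of x _ a]])
  then have small_ball: "(\<integral>\<^sup>+w. indicator (ball a (t * \<rho>)) w * ennreal (g w) \<partial>lborel) \<le> ennreal B"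
    using nn_integral_ball_le_hl_max_powr[OF g g_nonneg r S _ _ _ M, of "t * \<rho>" "2 * \<rho>" a] t \<rho>
    unfolding B_def \<omega>_def n_def by simp
  have I: "I \<le> ennreal (B / t ^ n)"
  proof -
    have "I = ennreal (1 / t ^ n) * (\<integral>\<^sup>+w. indicator (ball a (t * \<rho>)) w * ennreal (g w) \<partial>lborel)"
      unfolding I_def n_def using t by (intro nn_integral_ball_dilation) auto
    also have "\<dots> \<le> ennreal (1 / t ^ n) * ennreal B"
      using small_ball by (rule mult_left_mono) simp
    also have "\<dots> = ennreal (B / t ^ n)"
      using t B_nonneg by (subst ennreal_mult[symmetric]) auto
    finally show ?thesis .
  qed
  have "(\<integral>\<^sup>+z. indicator (ball a \<rho>) z * ennreal (g (a + t *\<^sub>R (z - a)) * norm (z - a)) \<partial>lborel) \<le> ennreal \<rho> * I"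
    unfolding I_def using g_nonneg \<rho> by (intro nn_integral_ball_mult_norm_le) auto
  also have "\<dots> \<le> ennreal \<rho> * ennreal (B / t ^ n)"
    using I by (rule mult_left_mono) simp
  also have "\<dots> = ennreal (\<rho> * (B / t ^ n))"
    using \<rho> t B_nonneg by (intro ennreal_mult[symmetric]) auto
  also have "\<rho> * (B / t ^ n) = 2 * \<omega> * 2 powr (real n / r) * S * \<rho> ^ (n + 1) * t powr (- (real n / r))"
    unfolding B_def using t \<rho>
    by (simp add: powr_divide powr_minus_divide power_mult_distrib field_simps)
  finally show ?thesis
    unfolding \<omega>_def n_def .
qed

lemma abs_diff_le_nn_integral_segment:
  fixes f :: "'a::euclidean_space \<Rightarrow> real" and grad :: "'a \<Rightarrow> 'a"
  assumes df: "\<forall>x. (f has_derivative (\<lambda>h. grad x \<bullet> h)) (at x)" and cg: "continuous_on UNIV grad"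
  shows "ennreal \<bar>f z - f a\<bar>
    \<le> (\<integral>\<^sup>+t. ennreal (indicator {0..1} t * (norm (grad (a + t *\<^sub>R (z - a))) * norm (z - a))) \<partial>lborel)"
proof -
  define \<phi> where "\<phi> t = f (a + t *\<^sub>R (z - a))" for t :: real
  define \<phi>' where "\<phi>' t = grad (a + t *\<^sub>R (z - a)) \<bullet> (z - a)" for t :: real
  define G where "G t = norm (grad (a + t *\<^sub>R (z - a))) * norm (z - a)" for t :: real
  have "(\<phi> has_vector_derivative \<phi>' t) (at t within {0..1})" for t
  proof -
    have "((\<lambda>t. a + t *\<^sub>R (z - a)) has_derivative (\<lambda>s. s *\<^sub>R (z - a))) (at t within {0..1})"
      by (auto intro!: derivative_eq_intros)
    from has_derivative_compose[OF this df[rule_format]]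
    show ?thesis
      unfolding \<phi>_def \<phi>'_def has_vector_derivative_def by (simp add: inner_scaleR_right mult.commute)
  qed
  then have ftc: "(\<phi>' has_integral f z - f a) {0..1}"
    using fundamental_theorem_of_calculus[of 0 1 \<phi> \<phi>'] unfolding \<phi>_def by simp
  have "continuous_on {0..1} G"
    unfolding G_def by (intro continuous_intros continuous_on_compose2[OF cg]) auto
  then have G: "(G has_integral integral {0..1} G) {0..1}"
    by (intro integrable_integral integrable_continuous_interval)
  have "norm (integral {0..1} \<phi>') \<le> integral {0..1} G"
    using ftc G unfolding \<phi>'_def G_def
    by (intro integral_norm_bound_integral) (auto simp: Cauchy_Schwarz_ineq2)
  then have "\<bar>f z - f a\<bar> \<le> integral {0..1} G"
    using ftc by (simp add: integral_unique)
  then have "ennreal \<bar>f z - f a\<bar> \<le> ennreal (integral {0..1} G)"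
    by (rule ennreal_leI)
  also have "\<dots> = (\<integral>\<^sup>+t. ennreal (indicator {0..1} t * G t) \<partial>lborel)"
  proof (rule nn_integral_has_integral_lebesgue[symmetric])
    show "(G has_integral integral {0..1} G) {0..1}"
      by (fact G)
  qed (simp add: G_def)
  finally show ?thesis
    unfolding G_def .
qed

lemma nn_integral_ball_abs_diff_le_segments:
  fixes f :: "'a::euclidean_space \<Rightarrow> real" and grad :: "'a \<Rightarrow> 'a"
  assumes df: "\<forall>x. (f has_derivative (\<lambda>h. grad x \<bullet> h)) (at x)" and cg: "continuous_on UNIV grad"
  shows "(\<integral>\<^sup>+z. indicator (ball a \<rho>) z * ennreal \<bar>f z - f a\<bar> \<partial>lborel)
    \<le> (\<integral>\<^sup>+t. (\<integral>\<^sup>+z. indicator (ball a \<rho>) z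
          * ennreal (indicator {0..1} t * (norm (grad (a + t *\<^sub>R (z - a))) * norm (z - a))) \<partial>lborel) \<partial>lborel)"
proof -
  define H where "H z t = indicator (ball a \<rho>) z
    * ennreal (indicator {0..1} t * (norm (grad (a + t *\<^sub>R (z - a))) * norm (z - a)))" for z :: 'a and t :: real
  have [measurable]: "grad \<in> borel_measurable borel" "ball a \<rho> \<in> sets borel"
    using cg by (simp_all add: borel_measurable_continuous_onI)
  have "indicator (ball a \<rho>) z * ennreal \<bar>f z - f a\<bar> \<le> (\<integral>\<^sup>+t. H z t \<partial>lborel)" for z
  proof -
    have "indicator (ball a \<rho>) z * ennreal \<bar>f z - f a\<bar>
       \<le> indicator (ball a \<rho>) z * (\<integral>\<^sup>+t. ennreal (indicator {0..1} t * (norm (grad (a + t *\<^sub>R (z - a))) * norm (z - a))) \<partial>lborel)"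
      by (rule mult_left_mono[OF abs_diff_le_nn_integral_segment[OF df cg]]) simp
    also have "\<dots> = (\<integral>\<^sup>+t. H z t \<partial>lborel)"
      unfolding H_def by (rule nn_integral_cmult[symmetric]) measurable
    finally show ?thesis .
  qed
  then have "(\<integral>\<^sup>+z. indicator (ball a \<rho>) z * ennreal \<bar>f z - f a\<bar> \<partial>lborel) \<le> (\<integral>\<^sup>+z. (\<integral>\<^sup>+t. H z t \<partial>lborel) \<partial>lborel)"
    by (rule nn_integral_mono)
  also have "\<dots> = (\<integral>\<^sup>+t. (\<integral>\<^sup>+z. H z t \<partial>lborel) \<partial>lborel)"
    by (rule pair_sigma_finite.Fubini'[symmetric]) (unfold_locales, unfold H_def, measurable)
  finally show ?thesis
    unfolding H_def .
qed

lemma nn_integral_ball_abs_diff_le: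
  fixes f :: "'a::euclidean_space \<Rightarrow> real" and grad :: "'a \<Rightarrow> 'a"
  assumes df: "\<forall>x. (f has_derivative (\<lambda>h. grad x \<bullet> h)) (at x)" and cg: "continuous_on UNIV grad"
    and r: "real DIM('a) < r" and S: "0 < S" and \<rho>: "0 < \<rho>" and ax: "dist x a \<le> \<rho>"
    and M: "hl_max (\<lambda>y. norm (grad y) powr r) x \<le> ennreal (S powr r)"
  shows "(\<integral>\<^sup>+z. indicator (ball a \<rho>) z * ennreal \<bar>f z - f a\<bar> \<partial>lborel)
    \<le> ennreal (2 * unit_ball_vol (real DIM('a)) * 2 powr (real DIM('a) / r) * S * \<rho> ^ (DIM('a) + 1)
        / (1 - real DIM('a) / r))"
proof -
  define K where "K = 2 * unit_ball_vol (real DIM('a)) * 2 powr (real DIM('a) / r) * S * \<rho> ^ (DIM('a) + 1)"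
  have K: "0 \<le> K" unfolding K_def using S \<rho> by simp
  have r1: "1 \<le> r" and nr: "real DIM('a) / r < 1"
    using r DIM_positive[where 'a='a] by (linarith, simp)
  have [measurable]: "grad \<in> borel_measurable borel"
    using cg by (simp add: borel_measurable_continuous_onI)
  have "AE t in lborel. (\<integral>\<^sup>+z. indicator (ball a \<rho>) z
        * ennreal (indicator {0..1} t * (norm (grad (a + t *\<^sub>R (z - a))) * norm (z - a))) \<partial>lborel)
      \<le> ennreal (indicator {0..1} t * (K * t powr (- (real DIM('a) / r))))"
    using AE_lborel_singleton[of 0]
  proof eventually_elim
    case (elim t)
    show ?case
    proof (cases "t \<in> {0..1}")
      case True
      then have "0 < t" "t \<le> 1" using elim by auto
      then show ?thesis
        using True nn_integral_ball_dilated_le[of "\<lambda>w. norm (grad w)", OF _ _ r1 S \<rho> ax M]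
        unfolding K_def by simp
    qed simp
  qed
  then have "(\<integral>\<^sup>+z. indicator (ball a \<rho>) z * ennreal \<bar>f z - f a\<bar> \<partial>lborel)
      \<le> (\<integral>\<^sup>+t. ennreal (indicator {0..1} t * (K * t powr (- (real DIM('a) / r)))) \<partial>lborel)"
    by (intro order_trans[OF nn_integral_ball_abs_diff_le_segments[OF df cg]] nn_integral_mono_AE)
  \<comment> \<open>This is where n < r is needed: t powr (- n / r) is integrable near 0.\<close>
  also have "\<dots> = ennreal (K * (1 powr (- (real DIM('a) / r) + 1) / (- (real DIM('a) / r) + 1)))"
    using K nr by (intro nn_integral_has_integral_lebesgue has_integral_mult_right has_integral_powr_from_0) auto
  finally show ?thesis
    unfolding K_def by (simp add: field_simps)
qed

lemma abs_diff_mult_measure_le: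
  fixes f :: "'a::euclidean_space \<Rightarrow> real"
  assumes [measurable]: "f \<in> borel_measurable borel" and \<rho>: "\<rho> = norm (x - y)"
  shows "ennreal (\<bar>f x - f y\<bar> * (unit_ball_vol (real DIM('a)) * (\<rho> / 2) ^ DIM('a)))
    \<le> (\<integral>\<^sup>+z. indicator (ball x \<rho>) z * ennreal \<bar>f z - f x\<bar> \<partial>lborel)
      + (\<integral>\<^sup>+z. indicator (ball y \<rho>) z * ennreal \<bar>f z - f y\<bar> \<partial>lborel)"
proof -
  define W where "W = ball (midpoint x y) (\<rho> / 2)"
  have [measurable]: "ball x \<rho> \<in> sets borel" "ball y \<rho> \<in> sets borel"
    by simp_all
  have "W \<subseteq> ball v \<rho>" if "dist v (midpoint x y) = \<rho> / 2" for v
  proof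
    fix z assume "z \<in> W"
    then have "dist v z < dist v (midpoint x y) + \<rho> / 2"
      unfolding W_def using dist_triangle[of v z "midpoint x y"] by simp
    then show "z \<in> ball v \<rho>" using that by simp
  qed
  moreover have "dist x (midpoint x y) = \<rho> / 2" "dist y (midpoint x y) = \<rho> / 2"
    unfolding \<rho> using dist_midpoint[of x y] by (simp_all add: dist_norm norm_minus_commute)
  ultimately have W: "W \<subseteq> ball x \<rho>" "W \<subseteq> ball y \<rho>"
    by blast+
  have "ennreal \<bar>f x - f y\<bar> * indicator W z
      \<le> indicator (ball x \<rho>) z * ennreal \<bar>f z - f x\<bar> + indicator (ball y \<rho>) z * ennreal \<bar>f z - f y\<bar>" for z
  proof (cases "z \<in> W")
    case True
    have "ennreal \<bar>f x - f y\<bar> \<le> ennreal (\<bar>f z - f x\<bar> + \<bar>f z - f y\<bar>)"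
      by (rule ennreal_leI) simp
    moreover have "z \<in> ball x \<rho>" "z \<in> ball y \<rho>"
      using True W by auto
    ultimately show ?thesis
      using True by (simp add: ennreal_plus)
  qed simp
  then have "(\<integral>\<^sup>+z. ennreal \<bar>f x - f y\<bar> * indicator W z \<partial>lborel)
      \<le> (\<integral>\<^sup>+z. indicator (ball x \<rho>) z * ennreal \<bar>f z - f x\<bar> + indicator (ball y \<rho>) z * ennreal \<bar>f z - f y\<bar> \<partial>lborel)"
    by (rule nn_integral_mono)
  also have "\<dots> = (\<integral>\<^sup>+z. indicator (ball x \<rho>) z * ennreal \<bar>f z - f x\<bar> \<partial>lborel)
      + (\<integral>\<^sup>+z. indicator (ball y \<rho>) z * ennreal \<bar>f z - f y\<bar> \<partial>lborel)"
    by (rule nn_integral_add) measurable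
  finally show ?thesis
    using \<rho> unfolding W_def by (simp add: nn_integral_cmult_indicator emeasure_ball ennreal_mult)
qed

lemma morrey_inequality:
  fixes f :: "'a::euclidean_space \<Rightarrow> real" and grad :: "'a \<Rightarrow> 'a"
  assumes df: "\<forall>x. (f has_derivative (\<lambda>h. grad x \<bullet> h)) (at x)" and cg: "continuous_on UNIV grad"
    and r: "real DIM('a) < r" and S: "0 < S"
    and M: "hl_max (\<lambda>y. norm (grad y) powr r) x \<le> ennreal (S powr r)"
  shows "\<bar>f x - f y\<bar> \<le> 2 ^ (DIM('a) + 2) * 2 powr (real DIM('a) / r) / (1 - real DIM('a) / r) * norm (x - y) * S"
proof (cases "x = y")
  case False
  define n where "n = DIM('a)"
  define \<omega> where "\<omega> = unit_ball_vol (real n)"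
  define \<rho> where "\<rho> = norm (x - y)"
  define D where "D = 1 - real n / r"
  define C where "C = 2 * \<omega> * 2 powr (real n / r) * S * \<rho> ^ (n + 1) / D"
  have \<rho>: "0 < \<rho>" unfolding \<rho>_def using False by simp
  have \<omega>: "0 < \<omega>" unfolding \<omega>_def by simp
  have D: "0 < D"
    using r DIM_positive[where 'a='a] unfolding D_def n_def by (simp add: divide_less_eq)
  then have C: "0 \<le> C" unfolding C_def using \<omega> S \<rho> by simp
  have "f \<in> borel_measurable borel"
    using df by (intro borel_measurable_continuous_onI has_derivative_continuous_on) auto
  then have "ennreal (\<bar>f x - f y\<bar> * (\<omega> * (\<rho> / 2) ^ n))
      \<le> (\<integral>\<^sup>+z. indicator (ball x \<rho>) z * ennreal \<bar>f z - f x\<bar> \<partial>lborel)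
        + (\<integral>\<^sup>+z. indicator (ball y \<rho>) z * ennreal \<bar>f z - f y\<bar> \<partial>lborel)"
    unfolding \<omega>_def n_def by (rule abs_diff_mult_measure_le) (simp add: \<rho>_def)
  also have "\<dots> \<le> ennreal C + ennreal C"
    using nn_integral_ball_abs_diff_le[OF df cg r S \<rho> _ M, of x] nn_integral_ball_abs_diff_le[OF df cg r S \<rho> _ M, of y]
    unfolding C_def D_def \<omega>_def n_def \<rho>_def by (intro add_mono) (simp_all add: dist_commute dist_norm)
  also have "\<dots> = ennreal (2 * C)"
    using C by (simp flip: ennreal_plus)
  finally have "\<bar>f x - f y\<bar> * (\<omega> * (\<rho> / 2) ^ n) \<le> 2 * C"
    using C by (subst (asm) ennreal_le_iff) auto
  then have "\<bar>f x - f y\<bar> \<le> 2 * C / (\<omega> * (\<rho> / 2) ^ n)"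
    using \<omega> \<rho> by (simp add: pos_le_divide_eq)
  also have "\<dots> = 2 ^ (n + 2) * 2 powr (real n / r) / D * \<rho> * S"
    unfolding C_def using \<omega> \<rho> D by (simp add: power_divide field_simps)
  finally show ?thesis
    unfolding n_def D_def \<rho>_def .
qed simp

lemma morrey_inequality_hl_max:
  fixes f :: "'a::euclidean_space \<Rightarrow> real" and grad :: "'a \<Rightarrow> 'a"
  assumes df: "\<forall>x. (f has_derivative (\<lambda>h. grad x \<bullet> h)) (at x)" and cg: "continuous_on UNIV grad"
    and r: "real DIM('a) < r" and fin: "hl_max (\<lambda>y. norm (grad y) powr r) x \<noteq> \<infinity>"
  shows "\<bar>f x - f y\<bar> \<le> 2 ^ (DIM('a) + 2) * 2 powr (real DIM('a) / r) / (1 - real DIM('a) / r) * norm (x - y)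
    * enn2real (hl_max (\<lambda>y. norm (grad y) powr r) x) powr (1 / r)"
proof -
  define A where "A = 2 ^ (DIM('a) + 2) * 2 powr (real DIM('a) / r) / (1 - real DIM('a) / r) * norm (x - y)"
  define m where "m = enn2real (hl_max (\<lambda>y. norm (grad y) powr r) x)"
  have m: "hl_max (\<lambda>y. norm (grad y) powr r) x = ennreal m" "0 \<le> m"
    unfolding m_def using fin by (simp_all add: less_top)
  have r_pos: "0 < r"
    using r DIM_positive[where 'a='a] by linarith
  have "0 < 1 - real DIM('a) / r"
    using r r_pos by (simp add: divide_less_eq)
  then have A: "0 \<le> A"
    unfolding A_def by simp
  have bound: "\<bar>f x - f y\<bar> \<le> A * S" if "0 < S" "m \<le> S powr r" for S
    using morrey_inequality[OF df cg r \<open>0 < S\<close>, of x y] that m unfolding A_def by (simp add: ennreal_leI)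
  show ?thesis
  proof (cases "m = 0")
    case True
    have "\<bar>f x - f y\<bar> \<le> 0 + e" if "0 < e" for e
    proof -
      have "\<bar>f x - f y\<bar> \<le> A * (e / (A + 1))"
        using that A True by (intro bound) auto
      also have "\<dots> \<le> e"
        using that A by (simp add: field_simps)
      finally show ?thesis by simp
    qed
    then have "\<bar>f x - f y\<bar> \<le> 0"
      by (rule field_le_epsilon)
    then show ?thesis
      using True unfolding m_def[symmetric] A_def[symmetric] by simp
  next
    case False
    then show ?thesis
      using bound[of "m powr (1 / r)"] m r_pos unfolding m_def[symmetric] A_def[symmetric]
      by (simp add: powr_powr)
  qed
qed

section \<open>The level sets of difference quotients\<close>

lemma E_set_in_sets_lborel:
  assumes [measurable]: "f \<in> borel_measurable borel"
  shows "E_set lam b f \<in> sets (lborel \<Otimes>\<^sub>M lborel)"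
proof -
  have "E_set lam b f = {p \<in> space (borel \<Otimes>\<^sub>M borel).
      fst p \<noteq> snd p \<and> lam < \<bar>f (fst p) - f (snd p)\<bar> / norm (fst p - snd p) powr (1 + b)}"
    unfolding E_set_def by (auto simp: space_pair_measure)
  also have "\<dots> \<in> sets (borel \<Otimes>\<^sub>M borel)" by measurable
  finally show ?thesis by (simp add: sets_pair_measure_cong[OF sets_lborel sets_lborel])
qed

definition E_set_integral :: "real \<Rightarrow> real \<Rightarrow> real \<Rightarrow> ('a::euclidean_space \<Rightarrow> real) \<Rightarrow> 'a \<Rightarrow> ennreal" where
  "E_set_integral lam b p f x = (\<integral>\<^sup>+y. indicator (E_set lam b f) (x, y) * ennreal (norm (x - y) powr p) \<partial>lebesgue)"

lemma borel_measurable_E_set_integral: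
  assumes "f \<in> borel_measurable borel"
  shows "E_set_integral lam b p f \<in> borel_measurable lebesgue"
proof -
  have [measurable]: "E_set lam b f \<in> sets (lborel \<Otimes>\<^sub>M lborel)"
    using assms by (rule E_set_in_sets_lborel)
  have "(\<lambda>x. \<integral>\<^sup>+y. indicator (E_set lam b f) (x, y) * ennreal (norm (x - y) powr p) \<partial>lborel)
          \<in> borel_measurable lborel"
    by (rule lborel.borel_measurable_nn_integral) measurable
  then show ?thesis
    unfolding E_set_integral_def nn_integral_completion by (rule measurable_completion)
qed

lemma E_set_integral_le_sublevel:
  fixes f :: "'a::euclidean_space \<Rightarrow> real"
  assumes lam: "0 < lam" and lip: "\<And>y. \<bar>f x - f y\<bar> \<le> A * norm (x - y)"
  shows "E_set_integral lam b p f x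
    \<le> (\<integral>\<^sup>+y. indicator {y. y \<noteq> x \<and> norm (x - y) powr b < A / lam} y * ennreal (norm (x - y) powr p) \<partial>lborel)"
proof -
  have "indicator (E_set lam b f) (x, y) \<le> (indicator {y. y \<noteq> x \<and> norm (x - y) powr b < A / lam} y :: ennreal)" for y
  proof (cases "(x, y) \<in> E_set lam b f")
    case True
    then have "x \<noteq> y" and "lam * norm (x - y) powr (1 + b) < \<bar>f x - f y\<bar>"
      unfolding E_set_def by (auto simp: pos_less_divide_eq)
    moreover have "lam * norm (x - y) powr (1 + b) = norm (x - y) * (lam * norm (x - y) powr b)"
      using \<open>x \<noteq> y\<close> by (simp add: powr_add)
    ultimately have "norm (x - y) * (lam * norm (x - y) powr b) < norm (x - y) * A"
      using lip[of y] by argo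
    then have "lam * norm (x - y) powr b < A"
      by (rule mult_left_less_imp_less) simp
    then show ?thesis
      using True \<open>x \<noteq> y\<close> lam by (simp add: pos_less_divide_eq mult.commute)
  qed simp
  then show ?thesis
    unfolding E_set_integral_def nn_integral_completion by (intro nn_integral_mono mult_right_mono) simp_all
qed

lemma E_set_integral_root_le_lipschitz:
  fixes \<gamma> q :: real
  assumes \<gamma>: "\<gamma> \<noteq> 0" and q: "0 < q"
  obtains c where "0 < c"
    "\<And>(f :: 'a::euclidean_space \<Rightarrow> real) x lam A. 0 < lam \<Longrightarrow> 0 \<le> A \<Longrightarrow>
      (\<And>y. \<bar>f x - f y\<bar> \<le> A * norm (x - y)) \<Longrightarrow>
      enn_powr (E_set_integral lam (\<gamma> / q) (\<gamma> - real DIM('a)) f x) (1 / q) \<le> ennreal (c * A / lam)"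
proof -
  obtain c where c: "0 < c" and sublevel: "\<And>(x::'a) T. 0 \<le> T \<Longrightarrow>
      (\<integral>\<^sup>+y. indicator {y. y \<noteq> x \<and> norm (x - y) powr (\<gamma> / q) < T} y
         * ennreal (norm (x - y) powr (\<gamma> - real DIM('a))) \<partial>lborel) \<le> ennreal (c * T powr q)"
    using nn_integral_kernel_sublevel_le[OF \<gamma> q] by blast
  have "enn_powr (E_set_integral lam (\<gamma> / q) (\<gamma> - real DIM('a)) f x) (1 / q) \<le> ennreal (c powr (1 / q) * A / lam)"
    if lam: "0 < lam" and A: "0 \<le> A" and lip: "\<And>y. \<bar>f x - f y\<bar> \<le> A * norm (x - y)"
    for f :: "'a \<Rightarrow> real" and x lam A
  proof -
    have "E_set_integral lam (\<gamma> / q) (\<gamma> - real DIM('a)) f x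
        \<le> (\<integral>\<^sup>+y. indicator {y. y \<noteq> x \<and> norm (x - y) powr (\<gamma> / q) < A / lam} y
             * ennreal (norm (x - y) powr (\<gamma> - real DIM('a))) \<partial>lborel)"
      using lam lip by (rule E_set_integral_le_sublevel)
    also have "\<dots> \<le> ennreal (c * (A / lam) powr q)"
      using lam A by (intro sublevel) simp
    finally have "enn_powr (E_set_integral lam (\<gamma> / q) (\<gamma> - real DIM('a)) f x) (1 / q)
        \<le> ennreal ((c * (A / lam) powr q) powr (1 / q))"
      using c lam A q by (intro enn_powr_le_ennreal) auto
    also have "(c * (A / lam) powr q) powr (1 / q) = c powr (1 / q) * A / lam"
      using c lam A q by (simp add: powr_mult powr_powr)
    finally show ?thesis .
  qed
  moreover have "0 < c powr (1 / q)"
    using c by simp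
  ultimately show thesis
    using that by blast
qed

lemma E_set_integral_root_le_hl_max_root:
  fixes \<gamma> r q :: real
  assumes \<gamma>: "\<gamma> \<noteq> 0" and r: "real DIM('a::euclidean_space) < r" and q: "0 < q"
  obtains c where "0 < c"
    "\<And>(f :: 'a \<Rightarrow> real) grad x lam. \<forall>x. (f has_derivative (\<lambda>h. grad x \<bullet> h)) (at x) \<Longrightarrow>
      continuous_on UNIV grad \<Longrightarrow> 0 < lam \<Longrightarrow>
      enn_powr (E_set_integral lam (\<gamma> / q) (\<gamma> - real DIM('a)) f x) (1 / q)
        \<le> ennreal (c / lam) * hl_max_root r (\<lambda>y. norm (grad y)) x"
proof -
  define CM where "CM = 2 ^ (DIM('a) + 2) * 2 powr (real DIM('a) / r) / (1 - real DIM('a) / r)"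
  obtain c where c: "0 < c" and lipschitz: "\<And>(f :: 'a \<Rightarrow> real) x lam A. 0 < lam \<Longrightarrow> 0 \<le> A \<Longrightarrow>
      (\<And>y. \<bar>f x - f y\<bar> \<le> A * norm (x - y)) \<Longrightarrow>
      enn_powr (E_set_integral lam (\<gamma> / q) (\<gamma> - real DIM('a)) f x) (1 / q) \<le> ennreal (c * A / lam)"
    using E_set_integral_root_le_lipschitz[OF \<gamma> q] by blast
  have "0 < r"
    using r DIM_positive[where 'a='a] by linarith
  with r have CM: "0 < CM"
    unfolding CM_def by (simp add: divide_less_eq)
  have "enn_powr (E_set_integral lam (\<gamma> / q) (\<gamma> - real DIM('a)) f x) (1 / q)
      \<le> ennreal (c * CM / lam) * hl_max_root r (\<lambda>y. norm (grad y)) x"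
    if df: "\<forall>x. (f has_derivative (\<lambda>h. grad x \<bullet> h)) (at x)" and cg: "continuous_on UNIV grad"
      and lam: "0 < lam" for f :: "'a \<Rightarrow> real" and grad x lam
  proof (cases "hl_max (\<lambda>y. norm (grad y) powr r) x")
    case (real m)
    then have "\<bar>f x - f y\<bar> \<le> CM * m powr (1 / r) * norm (x - y)" for y
      using morrey_inequality_hl_max[OF df cg r, of x y] unfolding CM_def by (simp add: mult_ac)
    then have "enn_powr (E_set_integral lam (\<gamma> / q) (\<gamma> - real DIM('a)) f x) (1 / q)
        \<le> ennreal (c * (CM * m powr (1 / r)) / lam)"
      using CM lam by (intro lipschitz) simp_all
    also have "\<dots> = ennreal (c * CM / lam) * hl_max_root r (\<lambda>y. norm (grad y)) x"
      using real c CM lam by (simp add: hl_max_root_def enn_powr_ennreal flip: ennreal_mult)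
    finally show ?thesis .
  qed (use c CM lam in \<open>simp add: hl_max_root_def ennreal_mult_top\<close>)
  with c CM show thesis
    by (intro that[of "c * CM"]) simp_all
qed

lemma SUP_E_set_integral_le:
  fixes f :: "'a::euclidean_space \<Rightarrow> real" and u :: "'a \<Rightarrow> real"
  assumes N: "ball_Banach_function_space N" and K: "maximal_bound N (1 / r) K" "0 < K"
    and r: "0 < r" and c: "0 < c"
    and f: "f \<in> borel_measurable borel" and u: "u \<in> borel_measurable lebesgue" "\<And>x. 0 \<le> u x"
    and pointwise: "\<And>x lam. 0 < lam \<Longrightarrow> enn_powr (E_set_integral lam b p f x) (1 / q) \<le> ennreal (c / lam) * hl_max_root r u x"
  shows "(SUP lam \<in> {0<..}. ennreal lam * ext_norm N (\<lambda>x. enn_powr (E_set_integral lam b p f x) (1 / q)))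
    \<le> ennreal (c * K powr (1 / r)) * N u"
proof (rule SUP_least)
  fix lam :: real
  assume "lam \<in> {0<..}"
  then have lam: "0 < lam" by simp
  have "hl_max_root r u \<in> borel_measurable lebesgue"
    unfolding hl_max_root_def by (intro measurable_enn_powr measurable_completion) (simp add: borel_measurable_hl_max)
  then have "ext_norm N (\<lambda>x. enn_powr (E_set_integral lam b p f x) (1 / q)) \<le> ennreal (c / lam) * ext_norm N (hl_max_root r u)"
    using c lam pointwise borel_measurable_E_set_integral[OF f]
    by (intro ext_norm_le_cmult[OF N]) auto
  also have "\<dots> \<le> ennreal (c / lam) * (ennreal (K powr (1 / r)) * N u)"
    using ext_norm_hl_max_root_le[OF N K r u] by (rule mult_left_mono) simp
  finally have "ennreal lam * ext_norm N (\<lambda>x. enn_powr (E_set_integral lam b p f x) (1 / q))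
      \<le> ennreal lam * (ennreal (c / lam) * (ennreal (K powr (1 / r)) * N u))"
    by (rule mult_left_mono) simp
  also have "\<dots> = ennreal (c * K powr (1 / r)) * N u"
    using lam c by (simp add: ennreal_mult[symmetric] mult.assoc[symmetric])
  finally show "ennreal lam * ext_norm N (\<lambda>x. enn_powr (E_set_integral lam b p f x) (1 / q))
      \<le> ennreal (c * K powr (1 / r)) * N u" .
qed

theorem theorem3p6:
  fixes \<gamma> r q K :: real
  assumes "\<gamma> \<noteq> 0" and "real DIM('a::euclidean_space) < r" and "0 < q"
  shows "\<exists>C>0. \<forall>(N :: ('a \<Rightarrow> real) \<Rightarrow> ennreal) (f :: 'a \<Rightarrow> real) (grad :: 'a \<Rightarrow> 'a).
     ball_Banach_function_space N \<and>
     (\<exists>K'. maximal_bound N (1 / r) K') \<and> hl_opnorm N (1 / r) = K \<and>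
     (\<forall>x. (f has_derivative (\<lambda>h. grad x \<bullet> h)) (at x)) \<and> continuous_on UNIV grad \<and>
     compact (closure {x. grad x \<noteq> 0})
     \<longrightarrow> (SUP lam \<in> {0<..}. ennreal lam * ext_norm N (\<lambda>x.
            enn_powr (\<integral>\<^sup>+y. indicator (E_set lam (\<gamma> / q) f) (x, y)
                 * ennreal (norm (x - y) powr (\<gamma> - real DIM('a))) \<partial>lebesgue) (1 / q)))
         \<le> ennreal C * N (\<lambda>x. norm (grad x))"
proof -
  have r: "0 < r"
    using assms(2) DIM_positive[where 'a='a] by linarith
  obtain c where c: "0 < c" and pointwise: "\<And>(f :: 'a \<Rightarrow> real) grad x lam.
      \<forall>x. (f has_derivative (\<lambda>h. grad x \<bullet> h)) (at x) \<Longrightarrow> continuous_on UNIV grad \<Longrightarrow> 0 < lam \<Longrightarrow>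
      enn_powr (E_set_integral lam (\<gamma> / q) (\<gamma> - real DIM('a)) f x) (1 / q)
        \<le> ennreal (c / lam) * hl_max_root r (\<lambda>y. norm (grad y)) x"
    using E_set_integral_root_le_hl_max_root[OF assms] by blast
  show ?thesis
    unfolding E_set_integral_def[symmetric]
  proof (intro exI[of _ "c * (\<bar>K\<bar> + 1) powr (1 / r)"] conjI allI impI; (elim conjE)?)
    show "0 < c * (\<bar>K\<bar> + 1) powr (1 / r)"
      using c by simp
    fix N :: "('a \<Rightarrow> real) \<Rightarrow> ennreal" and f :: "'a \<Rightarrow> real" and grad :: "'a \<Rightarrow> 'a"
    assume N: "ball_Banach_function_space N" and bounded: "\<exists>K'. maximal_bound N (1 / r) K'"
      and opnorm: "hl_opnorm N (1 / r) = K" and df: "\<forall>x. (f has_derivative (\<lambda>h. grad x \<bullet> h)) (at x)"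
      and cg: "continuous_on UNIV grad"
      and "compact (closure {x. grad x \<noteq> 0})" \<comment> \<open>not needed\<close>
    have "maximal_bound N (1 / r) (\<bar>K\<bar> + 1)"
      using maximal_bound_hl_opnorm[OF bounded] opnorm by (auto intro: maximal_bound_mono)
    moreover have "f \<in> borel_measurable borel"
      using df by (intro borel_measurable_continuous_onI has_derivative_continuous_on) auto
    moreover have "(\<lambda>x. norm (grad x)) \<in> borel_measurable lebesgue"
      using borel_measurable_continuous_onI[OF continuous_on_norm[OF cg]]
      by (simp add: measurable_completion measurable_lborel1)
    ultimately show "(SUP lam \<in> {0<..}. ennreal lam * ext_norm N (\<lambda>x. enn_powr (E_set_integral lam (\<gamma> / q) (\<gamma> - real DIM('a)) f x) (1 / q)))
        \<le> ennreal (c * (\<bar>K\<bar> + 1) powr (1 / r)) * N (\<lambda>x. norm (grad x))"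
      using pointwise[OF df cg] by (intro SUP_E_set_integral_le[OF N _ _ r c]) auto
  qed
qed

end
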